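(* Let $\varepsilon\in(0,1)$ and let $\tau,\alpha,f_0,g$ be as defined in the context. If $n$ is sufficiently large, then for every $x\in\{0,1\}^n$ with $f(x)<f_0$, \[E[g(\mathcal{M}(x))]\le 2.\]
   Context: $f$ is OneMax, $f(x)=\sum_i x_i$. $\mathcal{M}$ is standard bit mutation: $\mathcal{M}(x)$ flips each bit of $x$ independently with probability $1/n$. Potential function: $\tau=\frac{4e}{\varepsilon}$, $\alpha=1-\frac1\tau\ln\big(1+\frac1\tau\big)$, $f_0=\lceil\alpha n\rceil$, and $g(x)=\tau^{f(x)-f_0}$ if $f(x)\ge f_0$ and $g(x)=0$ otherwise. *)

theory Defs
  imports "HOL-Probability.Probability"
begin

definition onemax :: "bool list \<Rightarrow> nat" where
  "onemax x = length (filter id x)"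

definition std_mut :: "bool list \<Rightarrow> bool list pmf" where
  "std_mut x = map_pmf (\<lambda>F. map (\<lambda>i. x ! i \<noteq> F i) [0..<length x])
      (Pi_pmf {..<length x} False (\<lambda>_. bernoulli_pmf (1 / real (length x))))"

definition tau :: "real \<Rightarrow> real" where
  "tau \<epsilon> = 4 * exp 1 / \<epsilon>"

definition alpha :: "real \<Rightarrow> real" where
  "alpha \<epsilon> = 1 - (1 / tau \<epsilon>) * ln (1 + 1 / tau \<epsilon>)"

definition f0 :: "real \<Rightarrow> nat \<Rightarrow> int" where
  "f0 \<epsilon> n = \<lceil>alpha \<epsilon> * real n\<rceil>"

definition pot :: "real \<Rightarrow> nat \<Rightarrow> bool list \<Rightarrow> real" where
  "pot \<epsilon> n x = (if int (onemax x) \<ge> f0 \<epsilon> n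
                 then tau \<epsilon> powi (int (onemax x) - f0 \<epsilon> n) else 0)"

end

theory Submission
  imports Defs
begin

text \<open>
  Replacing the zero branch of the potential by a positive value gives
  \<open>pot \<epsilon> n y \<le> \<tau>^(f(y) - f\<^sub>0)\<close> for all y. The expectation of \<open>\<tau>^f(\<M>(x))\<close> factorises
  over the independent bits, and a bit that is 0 contributes \<open>1 + (\<tau> - 1)/n\<close>, so
  with \<open>k = f(x) < f\<^sub>0\<close> the bound becomes \<open>(1 + (\<tau> - 1)/n)^(n - f\<^sub>0) \<le> exp (\<tau>(1 - \<alpha>))\<close>.
  The constant \<open>\<alpha>\<close> is chosen exactly so that this equals \<open>1 + 1/\<tau> \<le> 2\<close>. The bound
  holds for every n, not only for large n.
\<close>

lemma onemax_conv_card: "onemax x = card {i. i < length x \<and> x ! i}"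
  unfolding onemax_def by (simp add: length_filter_conv_card)

lemma power_onemax_flip:
  fixes t :: real
  shows "t ^ onemax (map (\<lambda>i. x ! i \<noteq> F i) [0..<length x]) =
         (\<Prod>i<length x. if x ! i \<noteq> F i then t else 1)"
proof -
  have "onemax (map (\<lambda>i. x ! i \<noteq> F i) [0..<length x]) = card ({..<length x} \<inter> {i. x ! i \<noteq> F i})"
    unfolding onemax_conv_card by (auto intro!: arg_cong[where f = card])
  then show ?thesis
    by (simp add: prod.If_cases)
qed

lemma finite_set_pmf_std_mut: "finite (set_pmf (std_mut x))"
proof (rule finite_subset)
  show "set_pmf (std_mut x) \<subseteq> {ys. set ys \<subseteq> UNIV \<and> length ys = length x}"
    unfolding std_mut_def by auto
qed (use finite_lists_length_eq[of "UNIV :: bool set" "length x"] in simp)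

lemma expectation_power_onemax_std_mut_le:
  fixes t :: real
  assumes t: "1 \<le> t" and "x \<noteq> []"
  shows "measure_pmf.expectation (std_mut x) (\<lambda>y. t ^ onemax y)
     \<le> t ^ onemax x * (1 + (t - 1) / length x) ^ (length x - onemax x)"
proof -
  define n where "n = length x"
  define p :: real where "p = 1 / n"
  define q where "q = 1 + (t - 1) / n"
  have "0 < n"
    using \<open>x \<noteq> []\<close> by (simp add: n_def)
  then have p: "0 \<le> p" "p \<le> 1" "p * (t - 1) = (t - 1) / n"
    by (auto simp: p_def)
  have "measure_pmf.expectation (std_mut x) (\<lambda>y. t ^ onemax y) =
     measure_pmf.expectation (Pi_pmf {..<n} False (\<lambda>_. bernoulli_pmf p))
        (\<lambda>F. \<Prod>i<n. if x ! i \<noteq> F i then t else 1)"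
    unfolding std_mut_def p_def n_def integral_map_pmf power_onemax_flip ..
  also have "\<dots> = (\<Prod>i<n. measure_pmf.expectation (bernoulli_pmf p)
                              (\<lambda>v. if x ! i \<noteq> v then t else 1))"
    by (rule expectation_prod_Pi_pmf) (use t in \<open>auto intro: integrable_measure_pmf_finite\<close>)
  also have "\<dots> \<le> (\<Prod>i<n. if x ! i then t else q)"
  proof (rule prod_mono)
    fix i
    have "(t - 1) / n \<le> t"
      using p t mult_left_le_one_le[of "t - 1" p] by auto
    then show "0 \<le> measure_pmf.expectation (bernoulli_pmf p) (\<lambda>v. if x ! i \<noteq> v then t else 1) \<and>
        measure_pmf.expectation (bernoulli_pmf p) (\<lambda>v. if x ! i \<noteq> v then t else 1)
          \<le> (if x ! i then t else q)"
      using p t unfolding q_def by (cases "x ! i") (auto simp: algebra_simps)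
  qed
  also have "\<dots> = t ^ card ({..<n} \<inter> {i. x ! i}) * q ^ card ({..<n} - {i. x ! i})"
    by (simp add: prod.If_cases Diff_eq)
  also have "card ({..<n} \<inter> {i. x ! i}) = onemax x"
    unfolding onemax_conv_card n_def by (auto intro: arg_cong[where f = card])
  also have "card ({..<n} - {i. x ! i}) = n - onemax x"
    by (simp add: card_Diff_subset_Int flip: \<open>card ({..<n} \<inter> {i. x ! i}) = onemax x\<close>)
  finally show ?thesis
    unfolding q_def n_def .
qed

lemma power_mult_power_div_le:
  fixes q t :: real
  assumes "0 < q" "q \<le> t" and "k \<le> F" "F \<le> m"
  shows "t ^ k * q ^ (m - k) / t ^ F \<le> q ^ (m - F)"
proof -
  have "t ^ k * q ^ (m - k) = t ^ k * q ^ (F - k) * q ^ (m - F)"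
    using assms by (simp add: mult.assoc flip: power_add)
  also have "\<dots> \<le> t ^ k * t ^ (F - k) * q ^ (m - F)"
    using assms by (intro mult_right_mono mult_left_mono power_mono) auto
  also have "\<dots> = q ^ (m - F) * t ^ F"
    using assms by (simp add: mult.commute flip: power_add)
  finally show ?thesis
    using assms by (simp add: divide_le_eq)
qed

lemma one_plus_div_power_le_exp:
  fixes s :: real
  assumes "0 \<le> s" and "F \<le> n"
  shows "(1 + s / n) ^ (n - F) \<le> exp (s * (1 - F / n))"
proof (cases "n = 0")
  case False
  have "(1 + s / n) ^ (n - F) \<le> exp (s / n) ^ (n - F)"
    using assms by (intro power_mono) (auto simp: add.commute)
  also have "\<dots> = exp (s * (1 - F / n))"
    using assms False by (auto simp: exp_of_nat_mult [symmetric] of_nat_diff field_simps)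
  finally show ?thesis .
qed (use assms in simp)

lemma power_mult_one_plus_div_power_le_exp:
  fixes t a :: real
  assumes "1 \<le> t" and "k \<le> F" "F \<le> n" "0 < n" and "a * n \<le> F"
  shows "t ^ k * (1 + (t - 1) / n) ^ (n - k) / t ^ F \<le> exp (t * (1 - a))"
proof -
  have "t ^ k * (1 + (t - 1) / n) ^ (n - k) / t ^ F \<le> (1 + (t - 1) / n) ^ (n - F)"
  proof (rule power_mult_power_div_le)
    have "(t - 1) / n \<le> t - 1"
      using assms mult_left_mono[of 1 "real n" "t - 1"] by (simp add: divide_le_eq)
    then show "1 + (t - 1) / n \<le> t"
      by simp
  qed (use assms in \<open>auto intro: add_pos_nonneg\<close>)
  also have "\<dots> \<le> exp ((t - 1) * (1 - F / n))"
    using assms by (intro one_plus_div_power_le_exp) auto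
  also have "\<dots> \<le> exp (t * (1 - a))"
  proof -
    have "a \<le> F / n" "F / n \<le> 1"
      using assms by (auto simp: field_simps)
    then have "(t - 1) * (1 - F / n) \<le> t * (1 - a)"
      using assms by (intro mult_mono) auto
    then show ?thesis
      by simp
  qed
  finally show ?thesis .
qed

lemma tau_gt_one:
  assumes "0 < \<epsilon>" "\<epsilon> < 1"
  shows "1 < tau \<epsilon>"
proof -
  have "1 < 4 * exp (1::real)"
    using exp_ge_add_one_self[of 1] by simp
  also have "\<dots> \<le> 4 * exp 1 / \<epsilon>"
    using assms by (simp add: le_divide_eq)
  finally show ?thesis
    unfolding tau_def .
qed

lemma tau_mult_one_minus_alpha:
  assumes "0 < \<epsilon>" "\<epsilon> < 1"
  shows "tau \<epsilon> * (1 - alpha \<epsilon>) = ln (1 + 1 / tau \<epsilon>)"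
  using tau_gt_one[OF assms] by (simp add: alpha_def)

lemma f0_le:
  assumes "0 < \<epsilon>" "\<epsilon> < 1"
  shows "f0 \<epsilon> n \<le> int n"
proof -
  have "0 \<le> tau \<epsilon> * (1 - alpha \<epsilon>)"
    using tau_mult_one_minus_alpha[OF assms] tau_gt_one[OF assms] by simp
  then have "alpha \<epsilon> \<le> 1"
    using tau_gt_one[OF assms] by (simp add: zero_le_mult_iff)
  then have "alpha \<epsilon> * n \<le> n"
    using mult_right_mono[of "alpha \<epsilon>" 1 "real n"] by simp
  then show ?thesis
    unfolding f0_def by (simp add: ceiling_le_iff)
qed

lemma pot_le_power_div:
  assumes "1 < tau \<epsilon>" and "f0 \<epsilon> n = int F"
  shows "pot \<epsilon> n y \<le> tau \<epsilon> ^ onemax y / tau \<epsilon> ^ F"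
proof (cases "F \<le> onemax y")
  case True
  then show ?thesis
    using assms by (simp add: pot_def power_int_diff power_int_of_nat)
qed (use assms in \<open>simp add: pot_def\<close>)

theorem lemma5:
  fixes \<epsilon> :: real
  assumes "0 < \<epsilon>" and "\<epsilon> < 1"
  shows "\<exists>N. \<forall>n \<ge> N. \<forall>x :: bool list. length x = n \<longrightarrow> int (onemax x) < f0 \<epsilon> n \<longrightarrow>
           measure_pmf.expectation (std_mut x) (pot \<epsilon> n) \<le> 2"
proof (intro exI[of _ 0] allI impI)
  fix n :: nat and x :: "bool list"
  assume len: "length x = n" and below: "int (onemax x) < f0 \<epsilon> n"
  define t where "t = tau \<epsilon>"
  define F where "F = nat (f0 \<epsilon> n)"
  have t: "1 < t" "t * (1 - alpha \<epsilon>) = ln (1 + 1 / t)"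
    using tau_gt_one tau_mult_one_minus_alpha assms unfolding t_def by auto
  have F: "f0 \<epsilon> n = int F" "onemax x < F" "F \<le> n" "alpha \<epsilon> * n \<le> F"
    using below f0_le[OF assms, of n] unfolding F_def f0_def by linarith+
  have "measure_pmf.expectation (std_mut x) (pot \<epsilon> n)
      \<le> measure_pmf.expectation (std_mut x) (\<lambda>y. t ^ onemax y) / t ^ F"
    using pot_le_power_div[OF _ F(1)] t finite_set_pmf_std_mut
    by (subst integral_divide_zero [symmetric], intro integral_mono)
       (auto simp: t_def intro: integrable_measure_pmf_finite)
  also have "\<dots> \<le> t ^ onemax x * (1 + (t - 1) / n) ^ (n - onemax x) / t ^ F"
    using expectation_power_onemax_std_mut_le[of t x] t F len
    by (intro divide_right_mono) (auto simp flip: length_greater_0_conv)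
  also have "\<dots> \<le> exp (t * (1 - alpha \<epsilon>))"
    using t F by (intro power_mult_one_plus_div_power_le_exp) auto
  also have "\<dots> = 1 + 1 / t"
    using t by (simp add: add_pos_pos)
  also have "\<dots> \<le> 2"
    using t by simp
  finally show "measure_pmf.expectation (std_mut x) (pot \<epsilon> n) \<le> 2" .
qed

end
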